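(* For every $x\in\mathbb{N}$, every subsystem state $\psi^A_W$ belonging to $M_{C(x)}$ has the property that some node of $W$ is reachable by a directed path within $D[W]$ from every other node of $W$.
   Context: $D=(V,A)$ is a directed graph on $V=\{1,\dots,N\}$ with rates $T_{ij}\ge0$, $T_{ij}>0$ iff $(j,i)\in A$, $T_{ii}=0$. A subsystem state is $\psi^A_W$ with $W\subseteq V$ nonempty, $A:W\to\{S,I,R\}$; $S_i,I_i$ are single-node states; for $n\notin W$, $\psi^A_WI_n$ is the state on $W\cup\{n\}$ extending $A$ with $n$ in state $I$; $h^X_k(\psi^A_W)$ changes the state of $k\in W$ to $X$. $\mathrm{IN}_a(X)$ ($a\in\mathbb{N}=\{0,1,\dots\}$) is the set of nodes that can reach some member of $X$ by traversing at most $a$ arcs. For disjoint nonempty $X,Y\subset V$ and $i\notin X\cup Y$, $f_{C(x)}(X,Y,i)=1$ iff $\mathrm{IN}_a(X)\cap\mathrm{IN}_b(Y)=\emptyset$ in $D-i$ for all $a,b\in\mathbb{N}$ with $a+b=x$, else $0$; by convention $f_{C(x)}(\{n\},\emptyset,\{k\})=0$. For a $\{0,1\}$-valued function $f$, a state $\psi^A_W$ with $A:W\to\{S,I\}$ induces: $\psi^A_W$; $h^S_k(\psi^A_W)$ for $k\in W$ with $A_k=I$ and $T_{kn}>0$ for some $n\in W$ with $A_n=I$; and for each $k\in W$, $n\in V\setminus W$ with $T_{kn}>0$: the state $h^S_k(\psi^A_W)I_n$ if $f(\{n\},W\setminus\{k\},\{k\})=0$, or the states $h^S_k(\psi^A_W)$,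 $S_kI_n$, $S_k$ if it equals $1$. $M_f$ is the smallest set of subsystem states containing all $S_i,I_i$ and closed under induced states; $M_{C(x)}=M_{f_{C(x)}}$. $D[W]$ is the subgraph induced on $W$. *)

theory Defs
  imports Complex_Main
begin

datatype nstate = St_S | St_I | St_R

(* A subsystem state psi^A_W is a partial map: W = dom s, A = the values. *)
type_synonym substate = "nat \<Rightarrow> nstate option"

(* Vertex set V = {1..N}. Arc (j,i) present iff T i j > 0. *)
definition verts :: "nat \<Rightarrow> nat set" where
  "verts N = {1..N}"

definition arcs_del :: "nat \<Rightarrow> (nat \<Rightarrow> nat \<Rightarrow> real) \<Rightarrow> nat \<Rightarrow> (nat \<times> nat) set" where
  "arcs_del N T i = {(u, v). u \<in> verts N - {i} \<and> v \<in> verts N - {i} \<and> T v u > 0}"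

definition IN_del :: "nat \<Rightarrow> (nat \<Rightarrow> nat \<Rightarrow> real) \<Rightarrow> nat \<Rightarrow> nat \<Rightarrow> nat set \<Rightarrow> nat set" where
  "IN_del N T i a X = {u \<in> verts N - {i}. \<exists>v\<in>X. \<exists>m\<le>a. (u, v) \<in> (arcs_del N T i) ^^ m}"

(* f_{C(x)}(X,Y,i), valued in bool (True = 1), with the convention f({n},{},k) = 0. *)
definition fC :: "nat \<Rightarrow> (nat \<Rightarrow> nat \<Rightarrow> real) \<Rightarrow> nat \<Rightarrow> nat set \<Rightarrow> nat set \<Rightarrow> nat \<Rightarrow> bool" where
  "fC N T x X Y i =
     (if Y = {} \<and> (\<exists>n. X = {n}) then False
      else (\<forall>a b. a + b = x \<longrightarrow> IN_del N T i a X \<inter> IN_del N T i b Y = {}))"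

inductive_set Mf :: "nat \<Rightarrow> (nat \<Rightarrow> nat \<Rightarrow> real) \<Rightarrow> (nat set \<Rightarrow> nat set \<Rightarrow> nat \<Rightarrow> bool) \<Rightarrow> substate set"
  for N :: nat and T :: "nat \<Rightarrow> nat \<Rightarrow> real" and f :: "nat set \<Rightarrow> nat set \<Rightarrow> nat \<Rightarrow> bool"
where
  single_S: "i \<in> verts N \<Longrightarrow> [i \<mapsto> St_S] \<in> Mf N T f"
| single_I: "i \<in> verts N \<Longrightarrow> [i \<mapsto> St_I] \<in> Mf N T f"
| self: "s \<in> Mf N T f \<Longrightarrow> ran s \<subseteq> {St_S, St_I} \<Longrightarrow> s \<in> Mf N T f"
| recover: "s \<in> Mf N T f \<Longrightarrow> ran s \<subseteq> {St_S, St_I} \<Longrightarrow>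
      s k = Some St_I \<Longrightarrow> s n = Some St_I \<Longrightarrow> T k n > 0 \<Longrightarrow> s(k \<mapsto> St_S) \<in> Mf N T f"
| infect0: "s \<in> Mf N T f \<Longrightarrow> ran s \<subseteq> {St_S, St_I} \<Longrightarrow>
      k \<in> dom s \<Longrightarrow> n \<in> verts N - dom s \<Longrightarrow> T k n > 0 \<Longrightarrow>
      \<not> f {n} (dom s - {k}) k \<Longrightarrow> s(k \<mapsto> St_S, n \<mapsto> St_I) \<in> Mf N T f"
| infect1a: "s \<in> Mf N T f \<Longrightarrow> ran s \<subseteq> {St_S, St_I} \<Longrightarrow>
      k \<in> dom s \<Longrightarrow> n \<in> verts N - dom s \<Longrightarrow> T k n > 0 \<Longrightarrow>
      f {n} (dom s - {k}) k \<Longrightarrow> s(k \<mapsto> St_S) \<in> Mf N T f"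
| infect1b: "s \<in> Mf N T f \<Longrightarrow> ran s \<subseteq> {St_S, St_I} \<Longrightarrow>
      k \<in> dom s \<Longrightarrow> n \<in> verts N - dom s \<Longrightarrow> T k n > 0 \<Longrightarrow>
      f {n} (dom s - {k}) k \<Longrightarrow> [k \<mapsto> St_S, n \<mapsto> St_I] \<in> Mf N T f"
| infect1c: "s \<in> Mf N T f \<Longrightarrow> ran s \<subseteq> {St_S, St_I} \<Longrightarrow>
      k \<in> dom s \<Longrightarrow> n \<in> verts N - dom s \<Longrightarrow> T k n > 0 \<Longrightarrow>
      f {n} (dom s - {k}) k \<Longrightarrow> [k \<mapsto> St_S] \<in> Mf N T f"

abbreviation MC :: "nat \<Rightarrow> (nat \<Rightarrow> nat \<Rightarrow> real) \<Rightarrow> nat \<Rightarrow> substate set" where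
  "MC N T x \<equiv> Mf N T (fC N T x)"

definition arcs_induced :: "(nat \<Rightarrow> nat \<Rightarrow> real) \<Rightarrow> nat set \<Rightarrow> (nat \<times> nat) set" where
  "arcs_induced T W = {(u, v). u \<in> W \<and> v \<in> W \<and> T v u > 0}"

end

theory Submission
  imports Defs
begin

text \<open>Every rule generating \<open>M\<^sub>f\<close> either keeps the node set \<open>W\<close>, replaces it by
  \<open>{k}\<close> or \<open>{k, n}\<close>, or adds a node \<open>n\<close> with \<open>T\<^sub>k\<^sub>n > 0\<close>, i.e. with an arc from \<open>n\<close>
  into \<open>W\<close>. In each case a node reachable from all others inside \<open>D[W]\<close> persists, for
  every choice of \<open>f\<close>.\<close>

definition has_root :: "(nat \<Rightarrow> nat \<Rightarrow> real) \<Rightarrow> nat set \<Rightarrow> bool" where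
  "has_root T W \<longleftrightarrow> (\<exists>k\<in>W. \<forall>j\<in>W. (j, k) \<in> (arcs_induced T W)\<^sup>*)"

lemma has_root_singleton: "has_root T {i}"
  by (auto simp: has_root_def)

lemma arcs_induced_rtrancl_mono:
  "W \<subseteq> W' \<Longrightarrow> (arcs_induced T W)\<^sup>* \<subseteq> (arcs_induced T W')\<^sup>*"
  by (rule rtrancl_mono) (auto simp: arcs_induced_def)

lemma has_root_insert:
  assumes "has_root T W" and "k \<in> W" and "T k n > 0"
  shows "has_root T (insert n W)"
proof -
  let ?R = "(arcs_induced T (insert n W))\<^sup>*"
  obtain r where r: "r \<in> W" "\<forall>j\<in>W. (j, r) \<in> (arcs_induced T W)\<^sup>*"
    using assms(1) by (auto simp: has_root_def)
  have to_r: "(j, r) \<in> ?R" if "j \<in> W" for j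
    using r that arcs_induced_rtrancl_mono[of W "insert n W" T] by blast
  have "(n, k) \<in> arcs_induced T (insert n W)"
    using assms(2,3) by (auto simp: arcs_induced_def)
  then have "(n, r) \<in> ?R"
    using to_r[OF assms(2)] by (rule converse_rtrancl_into_rtrancl)
  then show ?thesis
    using r(1) to_r by (auto simp: has_root_def)
qed

lemma Mf_has_root:
  assumes "s \<in> Mf N T f"
  shows "has_root T (dom s)"
  using assms
proof (induction rule: Mf.induct)
  case (recover s k n)
  then have "dom (s(k \<mapsto> St_S)) = dom s" by auto
  then show ?case using recover.IH by (simp only:)
next
  case (infect0 s k n)
  then show ?case by (simp add: has_root_insert insert_absorb del: fun_upd_apply)
next
  case (infect1a s k n)
  then have "dom (s(k \<mapsto> St_S)) = dom s" by auto
  then show ?case using infect1a.IH by (simp only:)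
next
  case (infect1b s k n)
  have "dom [k \<mapsto> St_S, n \<mapsto> St_I] = insert n {k}" by auto
  moreover have "has_root T (insert n {k})"
    using has_root_singleton by (rule has_root_insert) (use infect1b in auto)
  ultimately show ?case by (simp only:)
qed (simp_all add: has_root_singleton del: fun_upd_apply)

theorem mainTheorem11:
  fixes N :: nat and T :: "nat \<Rightarrow> nat \<Rightarrow> real" and x :: nat and s :: substate
  assumes "\<forall>i j. T i j \<ge> 0"
    and "\<forall>i. T i i = 0"
    and "s \<in> MC N T x"
  shows "\<exists>k\<in>dom s. \<forall>j\<in>dom s. (j, k) \<in> (arcs_induced T (dom s))\<^sup>*"
  using Mf_has_root[OF assms(3)] by (simp add: has_root_def)

end
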